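(* For every even integer $n\ge 6$ there exists an $n$-intersection polished graph with exactly $n^2/4+3n/2$ vertices that has at least $2^{n/2}$ maximal cliques. Consequently, there is an infinite family of graphs $G$, each $k$-intersection polished for a suitable $k$ depending on $G$, whose number of maximal cliques is exponential in $\sqrt{|V(G)|}$.
   Context: All graphs are finite and simple. For a vertex $v$, $N[v]$ denotes its closed neighbourhood (the set of neighbours of $v$ together with $v$). For an integer $k$, $P^k(G)$ is the graph on the same vertex set as $G$ in which two distinct vertices $u,v$ are adjacent if and only if $|N[u]\cap N[v]|\ge k$, the closed neighbourhoods being taken in $G$. A graph $G$ is called $k$-intersection polished if $P^k(G)=G$. A clique is a set of pairwise adjacent vertices; it is maximal if it is not properly contained in another clique. *)

theory Defs
  imports Main
begin

definition simple_graph :: "'a set \<Rightarrow> ('a \<Rightarrow> 'a \<Rightarrow> bool) \<Rightarrow> bool" where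
  "simple_graph V E \<longleftrightarrow> finite V \<and>
     (\<forall>u v. E u v \<longrightarrow> u \<in> V \<and> v \<in> V) \<and>
     (\<forall>u v. E u v \<longrightarrow> E v u) \<and> (\<forall>v. \<not> E v v)"

definition closed_nbhd :: "'a set \<Rightarrow> ('a \<Rightarrow> 'a \<Rightarrow> bool) \<Rightarrow> 'a \<Rightarrow> 'a set" where
  "closed_nbhd V E v = insert v {u \<in> V. E v u}"

definition Pk_adj :: "nat \<Rightarrow> 'a set \<Rightarrow> ('a \<Rightarrow> 'a \<Rightarrow> bool) \<Rightarrow> 'a \<Rightarrow> 'a \<Rightarrow> bool" where
  "Pk_adj k V E u v \<longleftrightarrow> u \<in> V \<and> v \<in> V \<and> u \<noteq> v \<and>
     card (closed_nbhd V E u \<inter> closed_nbhd V E v) \<ge> k"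

definition intersection_polished :: "nat \<Rightarrow> 'a set \<Rightarrow> ('a \<Rightarrow> 'a \<Rightarrow> bool) \<Rightarrow> bool" where
  "intersection_polished k V E \<longleftrightarrow> Pk_adj k V E = E"

definition is_clique :: "'a set \<Rightarrow> ('a \<Rightarrow> 'a \<Rightarrow> bool) \<Rightarrow> 'a set \<Rightarrow> bool" where
  "is_clique V E C \<longleftrightarrow> C \<subseteq> V \<and> (\<forall>u\<in>C. \<forall>v\<in>C. u \<noteq> v \<longrightarrow> E u v)"

definition is_maximal_clique :: "'a set \<Rightarrow> ('a \<Rightarrow> 'a \<Rightarrow> bool) \<Rightarrow> 'a set \<Rightarrow> bool" where
  "is_maximal_clique V E C \<longleftrightarrow> is_clique V E C \<and> (\<nexists>D. is_clique V E D \<and> C \<subset> D)"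

end

theory Submission
  imports Defs "HOL-Library.Countable"
begin

text \<open>Write \<open>n = 2m\<close>. Take a hub joined to two copies of the cocktail-party graph on \<open>m\<close>
  twin pairs, where vertex \<open>(i, s)\<close> of one copy is joined to \<open>(j, t)\<close> of the other iff
  \<open>s = t\<close> exactly when \<open>i \<noteq> j\<close>, and pad with \<open>m\<^sup>2 - m - 1\<close> isolated vertices. Adjacent
  vertices then have at least \<open>2m\<close> common closed neighbours and non-adjacent ones fewer, so
  the graph is \<open>2m\<close>-intersection polished. The hub together with one vertex from each twin
  pair of the first copy is a clique; two different such choices cannot lie in a common
  clique, so they extend to \<open>2\<^sup>m\<close> distinct maximal cliques.\<close>

subsection \<open>Cliques\<close>

lemma is_clique_subset: "is_clique V E C \<Longrightarrow> D \<subseteq> C \<Longrightarrow> is_clique V E D"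
  unfolding is_clique_def by blast

lemma finite_maximal_cliques: "finite V \<Longrightarrow> finite {C. is_maximal_clique V E C}"
  by (rule finite_subset[of _ "Pow V"]) (auto simp: is_maximal_clique_def is_clique_def)

lemma is_clique_extends_to_maximal:
  assumes fin: "finite V" and K: "is_clique V E K"
  shows "\<exists>M. is_maximal_clique V E M \<and> K \<subseteq> M"
proof -
  define SS where "SS = {D. is_clique V E D \<and> K \<subseteq> D}"
  have finSS: "finite SS"
    by (rule finite_subset[of _ "Pow V"]) (auto simp: SS_def is_clique_def fin)
  have "K \<in> SS" using K by (simp add: SS_def)
  then obtain D where D: "D \<in> SS" "card D = Max (card ` SS)"
    using Max_in[of "card ` SS"] finSS by fastforce
  have "is_maximal_clique V E D"
    unfolding is_maximal_clique_def
  proof (intro conjI notI)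
    show "is_clique V E D" using D by (simp add: SS_def)
  next
    assume "\<exists>D'. is_clique V E D' \<and> D \<subset> D'"
    then obtain D' where D': "is_clique V E D'" "D \<subset> D'" by auto
    then have "D' \<in> SS" using D by (auto simp: SS_def)
    then have "card D' \<le> card D" using D finSS by simp
    moreover have "finite D'" using D' fin by (auto simp: is_clique_def intro: finite_subset)
    then have "card D < card D'" using D' by (intro psubset_card_mono)
    ultimately show False by simp
  qed
  then show ?thesis using D by (auto simp: SS_def)
qed

text \<open>Pairwise incompatible cliques have pairwise distinct maximal extensions.\<close>

lemma card_le_card_maximal_cliques:
  assumes fin: "finite V"
    and clique: "\<And>A. A \<in> \<A> \<Longrightarrow> is_clique V E (K A)"
    and incompatible: "\<And>A B. A \<in> \<A> \<Longrightarrow> B \<in> \<A> \<Longrightarrow> is_clique V E (K A \<union> K B) \<Longrightarrow> A = B"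
  shows "card \<A> \<le> card {C. is_maximal_clique V E C}"
proof -
  define M where "M A = (SOME C. is_maximal_clique V E C \<and> K A \<subseteq> C)" for A
  have M: "is_maximal_clique V E (M A) \<and> K A \<subseteq> M A" if "A \<in> \<A>" for A
    unfolding M_def
    by (rule someI_ex) (rule is_clique_extends_to_maximal[OF fin clique[OF that]])
  have "inj_on M \<A>"
  proof (rule inj_onI)
    fix A B assume AB: "A \<in> \<A>" "B \<in> \<A>" "M A = M B"
    then have "K A \<union> K B \<subseteq> M A" using M by auto
    moreover have "is_clique V E (M A)" using M AB(1) by (simp add: is_maximal_clique_def)
    ultimately show "A = B" using AB incompatible is_clique_subset by blast
  qed
  moreover have "M ` \<A> \<subseteq> {C. is_maximal_clique V E C}" using M by auto
  ultimately show ?thesis by (rule card_inj_on_le[OF _ _ finite_maximal_cliques[OF fin]])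
qed

subsection \<open>Transport along an injection\<close>

definition map_adj :: "('a \<Rightarrow> 'b) \<Rightarrow> ('a \<Rightarrow> 'a \<Rightarrow> bool) \<Rightarrow> 'b \<Rightarrow> 'b \<Rightarrow> bool" where
  "map_adj g E x y \<longleftrightarrow> (\<exists>u v. x = g u \<and> y = g v \<and> E u v)"

lemma map_adj_apply: "inj g \<Longrightarrow> map_adj g E (g u) (g v) = E u v"
  unfolding map_adj_def by (auto dest: injD)

lemma simple_graph_image:
  assumes inj: "inj g" and sg: "simple_graph V E"
  shows "simple_graph (g ` V) (map_adj g E)"
  using sg unfolding simple_graph_def map_adj_def by (blast dest: injD[OF inj])

lemma closed_nbhd_image:
  "inj g \<Longrightarrow> closed_nbhd (g ` V) (map_adj g E) (g u) = g ` closed_nbhd V E u"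
  unfolding closed_nbhd_def by (auto simp: map_adj_apply)

lemma intersection_polished_image:
  assumes inj: "inj g" and pol: "intersection_polished k V E"
  shows "intersection_polished k (g ` V) (map_adj g E)"
  unfolding intersection_polished_def
proof (intro ext)
  fix x y
  show "Pk_adj k (g ` V) (map_adj g E) x y = map_adj g E x y"
  proof (cases "x \<in> range g \<and> y \<in> range g")
    case True
    then obtain u v where uv: "x = g u" "y = g v" by auto
    have "card (closed_nbhd (g ` V) (map_adj g E) (g u) \<inter> closed_nbhd (g ` V) (map_adj g E) (g v))
        = card (closed_nbhd V E u \<inter> closed_nbhd V E v)"
      using inj by (simp add: closed_nbhd_image image_Int[symmetric] card_image inj_on_subset)
    moreover have "(g u \<in> g ` V) = (u \<in> V)" "(g v \<in> g ` V) = (v \<in> V)" "(g u = g v) = (u = v)"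
      using inj by (auto dest: injD)
    ultimately have "Pk_adj k (g ` V) (map_adj g E) (g u) (g v) = Pk_adj k V E u v"
      unfolding Pk_adj_def by simp
    also have "\<dots> = E u v" using pol unfolding intersection_polished_def by simp
    finally show ?thesis using uv inj by (simp add: map_adj_apply)
  next
    case False
    then show ?thesis unfolding Pk_adj_def map_adj_def by auto
  qed
qed

lemma is_clique_image_iff:
  assumes "inj g"
  shows "is_clique (g ` V) (map_adj g E) (g ` C) \<longleftrightarrow> is_clique V E C"
  using assms unfolding is_clique_def
  by (auto simp: map_adj_apply inj_image_subset_iff) (metis injD)

lemma is_maximal_clique_image:
  assumes inj: "inj g" and max: "is_maximal_clique V E C"
  shows "is_maximal_clique (g ` V) (map_adj g E) (g ` C)"
  unfolding is_maximal_clique_def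
proof (intro conjI notI)
  show "is_clique (g ` V) (map_adj g E) (g ` C)"
    using max inj by (simp add: is_maximal_clique_def is_clique_image_iff)
next
  assume "\<exists>D. is_clique (g ` V) (map_adj g E) D \<and> g ` C \<subset> D"
  then obtain D where D: "is_clique (g ` V) (map_adj g E) D" "g ` C \<subset> D" by blast
  then obtain D0 where "D = g ` D0"
    unfolding is_clique_def by (metis subset_image_iff)
  with D inj have "is_clique V E D0" "C \<subset> D0"
    by (auto simp: is_clique_image_iff inj_image_subset_iff inj_image_eq_iff)
  then show False using max unfolding is_maximal_clique_def by blast
qed

lemma card_maximal_cliques_le_image:
  assumes inj: "inj g" and fin: "finite V"
  shows "card {C. is_maximal_clique V E C} \<le> card {C. is_maximal_clique (g ` V) (map_adj g E) C}"
proof (rule card_inj_on_le)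
  show "inj_on ((`) g) {C. is_maximal_clique V E C}"
    using inj by (auto intro!: inj_onI simp: inj_image_eq_iff)
  show "(`) g ` {C. is_maximal_clique V E C} \<subseteq> {C. is_maximal_clique (g ` V) (map_adj g E) C}"
    using is_maximal_clique_image[OF inj] by auto
  show "finite {C. is_maximal_clique (g ` V) (map_adj g E) C}"
    using fin by (simp add: finite_maximal_cliques)
qed

subsection \<open>The construction\<close>

text \<open>\<open>Node b i s\<close> is the vertex with sign \<open>s\<close> in twin pair \<open>i\<close> of copy \<open>b\<close>.\<close>

datatype vert = Hub | Node bool nat bool | Pad nat

instance vert :: countable by countable_datatype

fun node_adj :: "vert \<Rightarrow> vert \<Rightarrow> bool" where
  "node_adj Hub (Node _ _ _) = True"
| "node_adj (Node _ _ _) Hub = True"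
| "node_adj (Node b i s) (Node c j t) = (if b = c then i \<noteq> j else ((s = t) = (i \<noteq> j)))"
| "node_adj _ _ = False"

lemma node_adj_sym: "node_adj u v = node_adj v u"
  by (cases u; cases v) auto

lemma not_node_adj_refl: "\<not> node_adj v v"
  by (cases v) auto

definition copy :: "nat \<Rightarrow> bool \<Rightarrow> vert set" where
  "copy m b = (\<lambda>(j, t). Node b j t) ` ({..<m} \<times> UNIV)"

definition transversal :: "nat \<Rightarrow> bool \<Rightarrow> (nat \<Rightarrow> bool) \<Rightarrow> vert set" where
  "transversal m b f = (\<lambda>j. Node b j (f j)) ` {..<m}"

definition verts :: "nat \<Rightarrow> vert set" where
  "verts m = insert Hub (copy m True \<union> copy m False \<union> Pad ` {..<m * m - m - 1})"

definition adj :: "nat \<Rightarrow> vert \<Rightarrow> vert \<Rightarrow> bool" where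
  "adj m u v \<longleftrightarrow> u \<in> verts m \<and> v \<in> verts m \<and> node_adj u v"

abbreviation nbhd :: "nat \<Rightarrow> vert \<Rightarrow> vert set" where
  "nbhd m v \<equiv> closed_nbhd (verts m) (adj m) v"

lemma mem_copy [simp]: "x \<in> copy m b \<longleftrightarrow> (\<exists>j t. j < m \<and> x = Node b j t)"
  unfolding copy_def by auto

lemma mem_transversal [simp]: "x \<in> transversal m b f \<longleftrightarrow> (\<exists>j. j < m \<and> x = Node b j (f j))"
  unfolding transversal_def by auto

lemma finite_copy [simp]: "finite (copy m b)"
  unfolding copy_def by simp

lemma finite_transversal [simp]: "finite (transversal m b f)"
  unfolding transversal_def by simp

lemma card_copy: "card (copy m b) = 2 * m"
proof -
  have "inj_on (\<lambda>(j, t). Node b j t) ({..<m} \<times> (UNIV :: bool set))"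
    by (auto simp: inj_on_def)
  then show ?thesis unfolding copy_def by (simp add: card_image card_cartesian_product)
qed

lemma card_transversal: "card (transversal m b f) = m"
  unfolding transversal_def by (simp add: card_image inj_on_def)

lemma card_copy_minus2:
  "x \<in> copy m b \<Longrightarrow> y \<in> copy m b \<Longrightarrow> x \<noteq> y \<Longrightarrow> card (copy m b - {x, y}) = 2 * m - 2"
  by (subst card_Diff_subset) (auto simp: card_copy)

lemma mem_verts [simp]:
  "Hub \<in> verts m" "Node b i s \<in> verts m \<longleftrightarrow> i < m" "Pad j \<in> verts m \<longleftrightarrow> j < m * m - m - 1"
  unfolding verts_def by auto

lemma finite_verts [simp]: "finite (verts m)"
  unfolding verts_def by simp

lemma card_verts:
  assumes "m \<ge> 2" shows "card (verts m) = m * m + 3 * m"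
proof -
  let ?R = "copy m True \<union> copy m False \<union> Pad ` {..<m * m - m - 1}"
  have "copy m True \<inter> copy m False = {}" "(copy m True \<union> copy m False) \<inter> Pad ` {..<m * m - m - 1} = {}"
    by auto
  then have "card ?R = 4 * m + (m * m - m - 1)"
    by (simp add: card_Un_disjoint card_copy card_image inj_on_def)
  moreover have "Hub \<notin> ?R" by auto
  moreover have "m + 1 \<le> m * m" using assms mult_le_mono1[OF assms, of m] by linarith
  ultimately show ?thesis unfolding verts_def by simp
qed

lemma mem_nbhd [simp]: "x \<in> nbhd m v \<longleftrightarrow> x = v \<or> (x \<in> verts m \<and> v \<in> verts m \<and> node_adj v x)"
  unfolding closed_nbhd_def adj_def by auto

lemma finite_nbhd [simp]: "finite (nbhd m v)"
  unfolding closed_nbhd_def by simp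

lemma simple_graph_verts_adj: "simple_graph (verts m) (adj m)"
  unfolding simple_graph_def adj_def by (auto simp: node_adj_sym not_node_adj_refl)

subsection \<open>Common neighbourhoods\<close>

lemma card_common_hub_node:
  assumes "i < m" shows "2 * m \<le> card (nbhd m Hub \<inter> nbhd m (Node b i s))"
proof -
  let ?X = "insert Hub (copy m b - {Node b i (\<not> s)})"
  have "card ?X = 2 * m" using assms by (simp add: card_copy)
  moreover have "?X \<subseteq> nbhd m Hub \<inter> nbhd m (Node b i s)" using assms by auto
  ultimately show ?thesis by (metis card_mono finite_Int finite_nbhd)
qed

lemma card_common_same_copy:
  assumes "i < m" "j < m" "i \<noteq> j" "m \<ge> 3"
  shows "2 * m \<le> card (nbhd m (Node b i s) \<inter> nbhd m (Node b j t))"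
proof -
  have "\<exists>k < 3. k \<noteq> i \<and> k \<noteq> j" by presburger
  with assms(4) obtain k where k: "k < m" "k \<noteq> i" "k \<noteq> j" by (meson less_le_trans)
  define w where "w = (if s = t then Node (\<not> b) k s else Node (\<not> b) i (\<not> s))"
  let ?X = "insert Hub (insert w (copy m b - {Node b i (\<not> s), Node b j (\<not> t)}))"
  have "card (copy m b - {Node b i (\<not> s), Node b j (\<not> t)}) = 2 * m - 2"
    using assms by (intro card_copy_minus2) auto
  then have "card ?X = 2 * m" using assms by (simp add: w_def)
  moreover have "?X \<subseteq> nbhd m (Node b i s) \<inter> nbhd m (Node b j t)"
    using assms k unfolding w_def by auto
  ultimately show ?thesis by (metis card_mono finite_Int finite_nbhd)
qed

lemma card_common_cross_adj:
  assumes "i < m" "k < m" "(s = t) = (i \<noteq> k)"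
  shows "2 * m \<le> card (nbhd m (Node b i s) \<inter> nbhd m (Node (\<not> b) k t))"
proof -
  define f where "f l = (if l = k then \<not> t else t)" for l
  define g where "g l = (if l = i then \<not> s else s)" for l
  let ?X = "transversal m b f \<union> transversal m (\<not> b) g"
  have "transversal m b f \<inter> transversal m (\<not> b) g = {}" by auto
  then have "card ?X = 2 * m" by (simp add: card_Un_disjoint card_transversal)
  moreover have "?X \<subseteq> nbhd m (Node b i s) \<inter> nbhd m (Node (\<not> b) k t)"
    using assms unfolding f_def g_def by auto
  ultimately show ?thesis by (metis card_mono finite_Int finite_nbhd)
qed

lemma common_nbhd_Pad: "u \<noteq> Pad j \<Longrightarrow> nbhd m u \<inter> nbhd m (Pad j) = {}"
  by (cases u) auto

lemma card_common_twins:
  assumes "i < m" "s \<noteq> t"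
  shows "card (nbhd m (Node b i s) \<inter> nbhd m (Node b i t)) < 2 * m"
proof -
  let ?X = "insert Hub (copy m b - {Node b i s, Node b i t})"
  have "card (copy m b - {Node b i s, Node b i t}) = 2 * m - 2"
    using assms by (intro card_copy_minus2) auto
  then have "card ?X < 2 * m" using assms by simp
  moreover have "nbhd m (Node b i s) \<inter> nbhd m (Node b i t) \<subseteq> ?X"
  proof
    fix x assume "x \<in> nbhd m (Node b i s) \<inter> nbhd m (Node b i t)"
    then show "x \<in> ?X" using assms by (cases x) (auto split: if_splits)
  qed
  ultimately show ?thesis by (meson card_mono finite.insertI finite_Diff finite_copy le_less_trans)
qed

lemma card_common_cross_nonadj:
  assumes "i < m" "k < m" "(s = t) \<noteq> (i \<noteq> k)"
  shows "card (nbhd m (Node b i s) \<inter> nbhd m (Node (\<not> b) k t)) < 2 * m"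
proof -
  define f where "f l = (if l = k then \<not> t else t)" for l
  define g where "g l = (if l = i then \<not> s else s)" for l
  let ?A = "transversal m b f - {Node b i (\<not> s)}"
  let ?B = "transversal m (\<not> b) g - {Node (\<not> b) k (\<not> t)}"
  let ?X = "insert Hub (?A \<union> ?B)"
  have "card ?X \<le> Suc (card (?A \<union> ?B))" by (simp add: card_insert_le_m1)
  also have "card (?A \<union> ?B) \<le> card ?A + card ?B" by (rule card_Un_le)
  also have "card ?A = m - 1"
    using assms by (subst card_Diff_singleton) (auto simp: card_transversal f_def g_def)
  also have "card ?B = m - 1"
    using assms by (subst card_Diff_singleton) (auto simp: card_transversal f_def g_def)
  finally have "card ?X < 2 * m" using assms by simp
  moreover have "nbhd m (Node b i s) \<inter> nbhd m (Node (\<not> b) k t) \<subseteq> ?X"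
  proof
    fix x assume "x \<in> nbhd m (Node b i s) \<inter> nbhd m (Node (\<not> b) k t)"
    then show "x \<in> ?X" using assms by (cases x) (auto simp: f_def g_def split: if_splits)
  qed
  ultimately show ?thesis by (meson card_mono finite.insertI finite_Diff finite_UnI
      finite_transversal le_less_trans)
qed

lemma card_common_nbhd_ge_iff_node_adj:
  assumes m: "m \<ge> 3" and uv: "u \<in> verts m" "v \<in> verts m" "u \<noteq> v"
  shows "2 * m \<le> card (nbhd m u \<inter> nbhd m v) \<longleftrightarrow> node_adj u v"
proof (cases "\<exists>j. u = Pad j \<or> v = Pad j")
  case True
  then obtain j where "u = Pad j \<or> v = Pad j" by blast
  then have "nbhd m u \<inter> nbhd m v = {}" "\<not> node_adj u v"
    using uv common_nbhd_Pad[of u j m] common_nbhd_Pad[of v j m] by (auto simp: Int_commute)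
  then show ?thesis using m by simp
next
  case False
  then consider (hub) b i s where "{u, v} = {Hub, Node b i s}"
    | (nodes) b i s c j t where "u = Node b i s" "v = Node c j t"
    using uv by (cases u; cases v) auto
  then show ?thesis
  proof cases
    case hub
    then show ?thesis using uv card_common_hub_node[of i m b s]
      by (auto simp: doubleton_eq_iff Int_commute)
  next
    case nodes
    consider "c = b" "i = j" | "c = b" "i \<noteq> j" | "c = (\<not> b)" "(s = t) = (i \<noteq> j)"
      | "c = (\<not> b)" "(s = t) \<noteq> (i \<noteq> j)"
      by blast
    then show ?thesis
    proof cases
      case 1
      then show ?thesis using nodes uv card_common_twins[of i m s t b] by auto
    next
      case 2
      then show ?thesis using nodes uv m card_common_same_copy[of i m j b s t] by auto
    next
      case 3
      then show ?thesis using nodes uv card_common_cross_adj[of i m j s t b] by auto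
    next
      case 4
      then show ?thesis using nodes uv card_common_cross_nonadj[of i m j s t b] by auto
    qed
  qed
qed

lemma intersection_polished_verts_adj:
  assumes "m \<ge> 3" shows "intersection_polished (2 * m) (verts m) (adj m)"
  unfolding intersection_polished_def Pk_adj_def
  using card_common_nbhd_ge_iff_node_adj[OF assms] not_node_adj_refl
  by (intro ext) (auto simp: adj_def)

lemma card_maximal_cliques_verts_adj: "2 ^ m \<le> card {C. is_maximal_clique (verts m) (adj m) C}"
proof -
  define K where "K A = insert Hub (transversal m True (\<lambda>j. j \<in> A))" for A
  have "card (Pow {..<m}) \<le> card {C. is_maximal_clique (verts m) (adj m) C}"
  proof (rule card_le_card_maximal_cliques[OF finite_verts])
    show "is_clique (verts m) (adj m) (K A)" for A
      unfolding is_clique_def K_def adj_def by auto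
  next
    fix A B assume AB: "A \<in> Pow {..<m}" "B \<in> Pow {..<m}" and "is_clique (verts m) (adj m) (K A \<union> K B)"
    then have clique: "adj m x y" if "x \<in> K A" "y \<in> K B" "x \<noteq> y" for x y
      using that unfolding is_clique_def by blast
    show "A = B"
    proof (rule ccontr)
      assume "A \<noteq> B"
      then obtain i where "(i \<in> A) \<noteq> (i \<in> B)" by blast
      with AB have "i < m" by auto
      then have "Node True i (i \<in> A) \<in> K A" "Node True i (i \<in> B) \<in> K B" by (auto simp: K_def)
      with \<open>(i \<in> A) \<noteq> (i \<in> B)\<close> show False using clique by (force simp: adj_def)
    qed
  qed
  then show ?thesis by (simp add: card_Pow)
qed

theorem theorem4:
  fixes n :: nat
  assumes "even n" and "n \<ge> 6"
  shows "\<exists>(V :: nat set) E. simple_graph V E \<and> intersection_polished n V E \<and>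
           card V = n\<^sup>2 div 4 + 3 * n div 2 \<and>
           card {C. is_maximal_clique V E C} \<ge> 2 ^ (n div 2)"
proof -
  obtain m where n: "n = 2 * m" using assms(1) by (auto elim: evenE)
  have m: "m \<ge> 3" using assms(2) n by simp
  have inj: "inj (to_nat :: vert \<Rightarrow> nat)" by (rule inj_to_nat)
  let ?V = "to_nat ` verts m" and ?E = "map_adj to_nat (adj m)"
  have "simple_graph ?V ?E"
    by (rule simple_graph_image[OF inj simple_graph_verts_adj])
  moreover have "intersection_polished n ?V ?E"
    using intersection_polished_image[OF inj intersection_polished_verts_adj[OF m]] n by simp
  moreover have "card ?V = n\<^sup>2 div 4 + 3 * n div 2"
    using card_verts[of m] m inj n by (simp add: card_image inj_on_subset power2_eq_square)
  moreover have "card {C. is_maximal_clique ?V ?E C} \<ge> 2 ^ (n div 2)"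
    using card_maximal_cliques_le_image[OF inj finite_verts, of m "adj m"]
      card_maximal_cliques_verts_adj[of m] n by simp
  ultimately show ?thesis by blast
qed

end
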